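(* Let $\mathcal{A}$ be an additive category, let $\mathcal{D}$ be a left weakly exact structure on $\mathcal{A}$ and let $I$ be a right weakly exact structure on $\mathcal{A}$. Then the class $\mathcal{W}$ of all kernel-cokernel pairs $A\xrightarrow{i}B\xrightarrow{d}C$ in $\mathcal{A}$ with $i\in I$ and $d\in\mathcal{D}$ is a weakly exact structure on $\mathcal{A}$.
   Context: Let $\mathcal{A}$ be an additive category. A kernel-cokernel pair (short exact sequence) is a pair of composable morphisms $A\xrightarrow{i}B\xrightarrow{d}C$ with $i$ a kernel of $d$ and $d$ a cokernel of $i$. A weakly exact structure on $\mathcal{A}$ is a class $\mathcal{W}$ of kernel-cokernel pairs, closed under isomorphisms of sequences and under finite direct sums of sequences, such that, calling $i$ an admissible monic (resp. $d$ an admissible epic) if $(i,d)\in\mathcal{W}$ for some $d$ (resp. some $i$): (E0) $1_A$ is an admissible monic for every object $A$; (E0)$^{op}$ $1_A$ is an admissible epic for every object $A$; (E2) for every admissible monic $i:A\to B$ and every morphism $t:A\to C$ the pushout of $i$ along $t$ exists and the resulting morphism $C\to S$ is an admissible monic; (E2)$^{op}$ for every admissible epic $h:A\to C$ and every morphism $t:B\to C$ the pullback of $h$ along $t$ exists and the resulting morphism $P\to B$ is an admissible epic. A right weakly exact structure on $\mathcal{A}$ is a class $I$ of morphisms that are kernels (of some morphism), closed under isomorphisms (of arrows), such that: (Id) for every object $X$, $1_X\in I$ and $0\to X$ is in $I$; (P) for every $f:X\to Y$ in $I$ and every morphism $h:X\to X'$ the pushout of $f$ along $h$ exists and the resulting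 morphism $f':X'\to Y'$ lies in $I$; (Q) if $A\xrightarrow{a}B\xrightarrow{b}C$ with $ba\in I$ and $a$ has a cokernel, then $a\in I$; (S) $I$ is closed under direct sums of morphisms. A left weakly exact structure is a class $\mathcal{D}$ of morphisms that are cokernels, closed under isomorphisms, satisfying the dual conditions: (Id$^{op}$) $1_X\in\mathcal{D}$ and $X\to 0$ is in $\mathcal{D}$ for all $X$; (P$^{op}$) pullbacks of morphisms in $\mathcal{D}$ along arbitrary morphisms exist and yield morphisms in $\mathcal{D}$; (Q$^{op}$) if $ba\in\mathcal{D}$ and $b$ has a kernel then $b\in\mathcal{D}$; (S$^{op}$) $\mathcal{D}$ is closed under direct sums of morphisms. *)

theory Defs
  imports Main
begin

record ('o, 'm) addcat =
  Ob   :: "'o set"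
  Mor  :: "'m set"
  Dom  :: "'m \<Rightarrow> 'o"
  Cod  :: "'m \<Rightarrow> 'o"
  Cmp  :: "'m \<Rightarrow> 'm \<Rightarrow> 'm"   (* Cmp C g f = g after f *)
  Idm  :: "'o \<Rightarrow> 'm"
  Add  :: "'m \<Rightarrow> 'm \<Rightarrow> 'm"
  Neg  :: "'m \<Rightarrow> 'm"
  Zer  :: "'o \<Rightarrow> 'o \<Rightarrow> 'm"

definition hom :: "('o,'m,'x) addcat_scheme \<Rightarrow> 'm \<Rightarrow> 'o \<Rightarrow> 'o \<Rightarrow> bool" where
  "hom C f X Y \<longleftrightarrow> f \<in> Mor C \<and> Dom C f = X \<and> Cod C f = Y \<and> X \<in> Ob C \<and> Y \<in> Ob C"

definition category :: "('o,'m,'x) addcat_scheme \<Rightarrow> bool" where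
  "category C \<longleftrightarrow>
     (\<forall>f\<in>Mor C. Dom C f \<in> Ob C \<and> Cod C f \<in> Ob C) \<and>
     (\<forall>X\<in>Ob C. hom C (Idm C X) X X) \<and>
     (\<forall>f g X Y Z. hom C f X Y \<longrightarrow> hom C g Y Z \<longrightarrow> hom C (Cmp C g f) X Z) \<and>
     (\<forall>f g h W X Y Z. hom C f W X \<longrightarrow> hom C g X Y \<longrightarrow> hom C h Y Z \<longrightarrow>
        Cmp C h (Cmp C g f) = Cmp C (Cmp C h g) f) \<and>
     (\<forall>f X Y. hom C f X Y \<longrightarrow> Cmp C f (Idm C X) = f \<and> Cmp C (Idm C Y) f = f)"

definition preadditive :: "('o,'m,'x) addcat_scheme \<Rightarrow> bool" where
  "preadditive C \<longleftrightarrow> category C \<and>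
     (\<forall>X\<in>Ob C. \<forall>Y\<in>Ob C.
        hom C (Zer C X Y) X Y \<and>
        (\<forall>f g. hom C f X Y \<longrightarrow> hom C g X Y \<longrightarrow> hom C (Add C f g) X Y) \<and>
        (\<forall>f. hom C f X Y \<longrightarrow> hom C (Neg C f) X Y) \<and>
        (\<forall>f g h. hom C f X Y \<longrightarrow> hom C g X Y \<longrightarrow> hom C h X Y \<longrightarrow>
            Add C (Add C f g) h = Add C f (Add C g h)) \<and>
        (\<forall>f g. hom C f X Y \<longrightarrow> hom C g X Y \<longrightarrow> Add C f g = Add C g f) \<and>
        (\<forall>f. hom C f X Y \<longrightarrow> Add C f (Zer C X Y) = f) \<and>
        (\<forall>f. hom C f X Y \<longrightarrow> Add C f (Neg C f) = Zer C X Y)) \<and>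
     (\<forall>f g h X Y Z. hom C f X Y \<longrightarrow> hom C g X Y \<longrightarrow> hom C h Y Z \<longrightarrow>
        Cmp C h (Add C f g) = Add C (Cmp C h f) (Cmp C h g)) \<and>
     (\<forall>f g h X Y Z. hom C h X Y \<longrightarrow> hom C f Y Z \<longrightarrow> hom C g Y Z \<longrightarrow>
        Cmp C (Add C f g) h = Add C (Cmp C f h) (Cmp C g h))"

definition zero_object :: "('o,'m,'x) addcat_scheme \<Rightarrow> 'o \<Rightarrow> bool" where
  "zero_object C Z \<longleftrightarrow> Z \<in> Ob C \<and>
     (\<forall>X\<in>Ob C. (\<exists>!f. hom C f Z X) \<and> (\<exists>!f. hom C f X Z))"

definition biproduct :: "('o,'m,'x) addcat_scheme \<Rightarrow> 'o \<Rightarrow> 'o \<Rightarrow> 'o \<Rightarrow> 'm \<Rightarrow> 'm \<Rightarrow> 'm \<Rightarrow> 'm \<Rightarrow> bool" where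
  "biproduct C X1 X2 X i1 i2 p1 p2 \<longleftrightarrow>
     hom C i1 X1 X \<and> hom C i2 X2 X \<and> hom C p1 X X1 \<and> hom C p2 X X2 \<and>
     Cmp C p1 i1 = Idm C X1 \<and> Cmp C p2 i2 = Idm C X2 \<and>
     Cmp C p2 i1 = Zer C X1 X2 \<and> Cmp C p1 i2 = Zer C X2 X1 \<and>
     Add C (Cmp C i1 p1) (Cmp C i2 p2) = Idm C X"

definition additive :: "('o,'m,'x) addcat_scheme \<Rightarrow> bool" where
  "additive C \<longleftrightarrow> preadditive C \<and> (\<exists>Z. zero_object C Z) \<and>
     (\<forall>X1\<in>Ob C. \<forall>X2\<in>Ob C. \<exists>X i1 i2 p1 p2. biproduct C X1 X2 X i1 i2 p1 p2)"

definition is_kernel :: "('o,'m,'x) addcat_scheme \<Rightarrow> 'm \<Rightarrow> 'm \<Rightarrow> bool" where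
  "is_kernel C i d \<longleftrightarrow> (\<exists>A B D. hom C i A B \<and> hom C d B D \<and> Cmp C d i = Zer C A D \<and>
     (\<forall>X g. hom C g X B \<longrightarrow> Cmp C d g = Zer C X D \<longrightarrow> (\<exists>!h. hom C h X A \<and> Cmp C i h = g)))"

definition is_cokernel :: "('o,'m,'x) addcat_scheme \<Rightarrow> 'm \<Rightarrow> 'm \<Rightarrow> bool" where
  "is_cokernel C d i \<longleftrightarrow> (\<exists>A B D. hom C i A B \<and> hom C d B D \<and> Cmp C d i = Zer C A D \<and>
     (\<forall>X g. hom C g B X \<longrightarrow> Cmp C g i = Zer C A X \<longrightarrow> (\<exists>!h. hom C h D X \<and> Cmp C h d = g)))"

definition is_iso :: "('o,'m,'x) addcat_scheme \<Rightarrow> 'm \<Rightarrow> bool" where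
  "is_iso C f \<longleftrightarrow> (\<exists>X Y g. hom C f X Y \<and> hom C g Y X \<and> Cmp C g f = Idm C X \<and> Cmp C f g = Idm C Y)"

definition iso_arrows :: "('o,'m,'x) addcat_scheme \<Rightarrow> 'm \<Rightarrow> 'm \<Rightarrow> bool" where
  "iso_arrows C f f' \<longleftrightarrow> (\<exists>X Y X' Y' a b. hom C f X Y \<and> hom C f' X' Y' \<and>
     hom C a X X' \<and> hom C b Y Y' \<and> is_iso C a \<and> is_iso C b \<and> Cmp C f' a = Cmp C b f)"

definition is_pushout :: "('o,'m,'x) addcat_scheme \<Rightarrow> 'm \<Rightarrow> 'm \<Rightarrow> 'm \<Rightarrow> 'm \<Rightarrow> bool" where
  "is_pushout C f h h' f' \<longleftrightarrow> (\<exists>X Y X' P. hom C f X Y \<and> hom C h X X' \<and> hom C h' Y P \<and>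
     hom C f' X' P \<and> Cmp C h' f = Cmp C f' h \<and>
     (\<forall>Q u v. hom C u Y Q \<longrightarrow> hom C v X' Q \<longrightarrow> Cmp C u f = Cmp C v h \<longrightarrow>
        (\<exists>!w. hom C w P Q \<and> Cmp C w h' = u \<and> Cmp C w f' = v)))"

definition is_pullback :: "('o,'m,'x) addcat_scheme \<Rightarrow> 'm \<Rightarrow> 'm \<Rightarrow> 'm \<Rightarrow> 'm \<Rightarrow> bool" where
  "is_pullback C g t t' g' \<longleftrightarrow> (\<exists>X Y Z P. hom C g Y Z \<and> hom C t X Z \<and> hom C t' P Y \<and>
     hom C g' P X \<and> Cmp C g t' = Cmp C t g' \<and>
     (\<forall>Q u v. hom C u Q Y \<longrightarrow> hom C v Q X \<longrightarrow> Cmp C g u = Cmp C t v \<longrightarrow>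
        (\<exists>!w. hom C w Q P \<and> Cmp C t' w = u \<and> Cmp C g' w = v)))"

definition dsum_mor :: "('o,'m,'x) addcat_scheme \<Rightarrow> 'm \<Rightarrow> 'm \<Rightarrow> 'm \<Rightarrow> bool" where
  "dsum_mor C f f1 f2 \<longleftrightarrow> (\<exists>X1 X2 X Y1 Y2 Y i1 i2 p1 p2 j1 j2 q1 q2.
     hom C f1 X1 Y1 \<and> hom C f2 X2 Y2 \<and>
     biproduct C X1 X2 X i1 i2 p1 p2 \<and> biproduct C Y1 Y2 Y j1 j2 q1 q2 \<and>
     f = Add C (Cmp C j1 (Cmp C f1 p1)) (Cmp C j2 (Cmp C f2 p2)))"

definition dsum_seq :: "('o,'m,'x) addcat_scheme \<Rightarrow> 'm \<times> 'm \<Rightarrow> 'm \<times> 'm \<Rightarrow> 'm \<times> 'm \<Rightarrow> bool" where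
  "dsum_seq C s s1 s2 \<longleftrightarrow> (case (s, s1, s2) of ((i, d), (i1, d1), (i2, d2)) \<Rightarrow>
     (\<exists>A1 A2 A B1 B2 B C1 C2 CC a1 a2 pa1 pa2 b1 b2 pb1 pb2 c1 c2 pc1 pc2.
       hom C i1 A1 B1 \<and> hom C d1 B1 C1 \<and> hom C i2 A2 B2 \<and> hom C d2 B2 C2 \<and>
       biproduct C A1 A2 A a1 a2 pa1 pa2 \<and> biproduct C B1 B2 B b1 b2 pb1 pb2 \<and>
       biproduct C C1 C2 CC c1 c2 pc1 pc2 \<and>
       i = Add C (Cmp C b1 (Cmp C i1 pa1)) (Cmp C b2 (Cmp C i2 pa2)) \<and>
       d = Add C (Cmp C c1 (Cmp C d1 pb1)) (Cmp C c2 (Cmp C d2 pb2))))"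

definition iso_seq :: "('o,'m,'x) addcat_scheme \<Rightarrow> 'm \<times> 'm \<Rightarrow> 'm \<times> 'm \<Rightarrow> bool" where
  "iso_seq C s s' \<longleftrightarrow> (case (s, s') of ((i, d), (i', d')) \<Rightarrow>
     (\<exists>A B D A' B' D' a b c. hom C i A B \<and> hom C d B D \<and> hom C i' A' B' \<and> hom C d' B' D' \<and>
        hom C a A A' \<and> hom C b B B' \<and> hom C c D D' \<and> is_iso C a \<and> is_iso C b \<and> is_iso C c \<and>
        Cmp C b i = Cmp C i' a \<and> Cmp C c d = Cmp C d' b))"

definition kc_pair :: "('o,'m,'x) addcat_scheme \<Rightarrow> 'm \<Rightarrow> 'm \<Rightarrow> bool" where
  "kc_pair C i d \<longleftrightarrow> is_kernel C i d \<and> is_cokernel C d i"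


definition weakly_exact :: "('o,'m,'x) addcat_scheme \<Rightarrow> ('m \<times> 'm) set \<Rightarrow> bool" where
  "weakly_exact C W \<longleftrightarrow>
     (\<forall>(i, d)\<in>W. kc_pair C i d) \<and>
     (\<forall>s s'. s \<in> W \<longrightarrow> iso_seq C s s' \<longrightarrow> s' \<in> W) \<and>
     (\<forall>s s1 s2. s1 \<in> W \<longrightarrow> s2 \<in> W \<longrightarrow> dsum_seq C s s1 s2 \<longrightarrow> s \<in> W) \<and>
     (\<forall>A\<in>Ob C. \<exists>d. (Idm C A, d) \<in> W) \<and>
     (\<forall>A\<in>Ob C. \<exists>i. (i, Idm C A) \<in> W) \<and>
     (\<forall>i t A B D. (\<exists>d. (i, d) \<in> W) \<longrightarrow> hom C i A B \<longrightarrow> hom C t A D \<longrightarrow>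
        (\<exists>h' f'. is_pushout C i t h' f') \<and>
        (\<forall>h' f'. is_pushout C i t h' f' \<longrightarrow> (\<exists>d. (f', d) \<in> W))) \<and>
     (\<forall>h t A B D. (\<exists>i. (i, h) \<in> W) \<longrightarrow> hom C h A D \<longrightarrow> hom C t B D \<longrightarrow>
        (\<exists>t' g'. is_pullback C h t t' g') \<and>
        (\<forall>t' g'. is_pullback C h t t' g' \<longrightarrow> (\<exists>i. (i, g') \<in> W)))"

definition right_weakly_exact :: "('o,'m,'x) addcat_scheme \<Rightarrow> 'm set \<Rightarrow> bool" where
  "right_weakly_exact C I \<longleftrightarrow>
     (\<forall>f\<in>I. \<exists>d. is_kernel C f d) \<and>
     (\<forall>f f'. f \<in> I \<longrightarrow> iso_arrows C f f' \<longrightarrow> f' \<in> I) \<and>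
     (\<forall>X\<in>Ob C. Idm C X \<in> I) \<and>
     (\<forall>Z X. zero_object C Z \<longrightarrow> X \<in> Ob C \<longrightarrow> Zer C Z X \<in> I) \<and>
     (\<forall>f h X Y X'. f \<in> I \<longrightarrow> hom C f X Y \<longrightarrow> hom C h X X' \<longrightarrow>
        (\<exists>h' f'. is_pushout C f h h' f') \<and>
        (\<forall>h' f'. is_pushout C f h h' f' \<longrightarrow> f' \<in> I)) \<and>
     (\<forall>a b A B D. hom C a A B \<longrightarrow> hom C b B D \<longrightarrow> Cmp C b a \<in> I \<longrightarrow>
        (\<exists>c. is_cokernel C c a) \<longrightarrow> a \<in> I) \<and>
     (\<forall>f f1 f2. f1 \<in> I \<longrightarrow> f2 \<in> I \<longrightarrow> dsum_mor C f f1 f2 \<longrightarrow> f \<in> I)"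

definition left_weakly_exact :: "('o,'m,'x) addcat_scheme \<Rightarrow> 'm set \<Rightarrow> bool" where
  "left_weakly_exact C D \<longleftrightarrow>
     (\<forall>f\<in>D. \<exists>i. is_cokernel C f i) \<and>
     (\<forall>f f'. f \<in> D \<longrightarrow> iso_arrows C f f' \<longrightarrow> f' \<in> D) \<and>
     (\<forall>X\<in>Ob C. Idm C X \<in> D) \<and>
     (\<forall>Z X. zero_object C Z \<longrightarrow> X \<in> Ob C \<longrightarrow> Zer C X Z \<in> D) \<and>
     (\<forall>g t Y Z X. g \<in> D \<longrightarrow> hom C g Y Z \<longrightarrow> hom C t X Z \<longrightarrow>
        (\<exists>t' g'. is_pullback C g t t' g') \<and>
        (\<forall>t' g'. is_pullback C g t t' g' \<longrightarrow> g' \<in> D)) \<and>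
     (\<forall>a b A B E. hom C a A B \<longrightarrow> hom C b B E \<longrightarrow> Cmp C b a \<in> D \<longrightarrow>
        (\<exists>k. is_kernel C k b) \<longrightarrow> b \<in> D) \<and>
     (\<forall>f f1 f2. f1 \<in> D \<longrightarrow> f2 \<in> D \<longrightarrow> dsum_mor C f f1 f2 \<longrightarrow> f \<in> D)"

end

theory Submission
  imports Defs
begin

text \<open>Each axiom of a weakly exact structure asks something of the monic, supplied by \<open>I\<close>,
something of the epic, supplied by \<open>D\<close>, and that the pair stays a kernel-cokernel pair.
Closure under isomorphisms and direct sums and the trivial sequences \<open>A = A \<rightarrow> 0\<close>,
\<open>0 \<rightarrow> A = A\<close> are routine. The real work is (E2): for \<open>(i, d)\<close> in the class and
\<open>t : A \<rightarrow> X\<close>, the pushout \<open>f'\<close> of \<open>i\<close> along \<open>t\<close> lies in \<open>I\<close>, hence is a kernel. The map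
\<open>d'\<close> induced on the pushout by \<open>d\<close> and \<open>0\<close> is a cokernel of \<open>f'\<close> (pushouts preserve
cokernels), so \<open>f'\<close>, being a kernel, is the kernel of its cokernel \<open>d'\<close>. Finally \<open>d' h' = d\<close>
lies in \<open>D\<close> and \<open>d'\<close> has a kernel, so \<open>d' \<in> D\<close> by the dual of axiom (Q). The pullback
axiom is the same argument in the opposite category.\<close>

locale additive_category =
  fixes C :: "('o, 'm) addcat"
  assumes additive: "additive C"
begin

lemma preadditive: "preadditive C"
  using additive unfolding additive_def by (rule conjunct1)

lemma category: "category C"
  using preadditive unfolding preadditive_def by (rule conjunct1)

lemma hom_Ob: "hom C f X Y \<Longrightarrow> X \<in> Ob C \<and> Y \<in> Ob C"
  by (simp add: hom_def)

lemma hom_unique: "hom C f X Y \<Longrightarrow> hom C f X' Y' \<Longrightarrow> X' = X \<and> Y' = Y"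
  by (simp add: hom_def)

lemma Mor_Ob: "f \<in> Mor C \<Longrightarrow> Dom C f \<in> Ob C" "f \<in> Mor C \<Longrightarrow> Cod C f \<in> Ob C"
  using category unfolding category_def by blast+

lemma homI: "f \<in> Mor C \<Longrightarrow> Dom C f = X \<Longrightarrow> Cod C f = Y \<Longrightarrow> hom C f X Y"
  using Mor_Ob by (auto simp: hom_def)

lemma Idm_hom: "X \<in> Ob C \<Longrightarrow> hom C (Idm C X) X X"
  using category unfolding category_def by blast

lemma Cmp_hom: "hom C f X Y \<Longrightarrow> hom C g Y Z \<Longrightarrow> hom C (Cmp C g f) X Z"
  using category unfolding category_def by blast

lemma Cmp_assoc: "hom C f W X \<Longrightarrow> hom C g X Y \<Longrightarrow> hom C h Y Z \<Longrightarrow>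
    Cmp C (Cmp C h g) f = Cmp C h (Cmp C g f)"
  using category unfolding category_def by metis

lemma Cmp_Idm_right: "hom C f X Y \<Longrightarrow> Cmp C f (Idm C X) = f"
  using category unfolding category_def by blast

lemma Cmp_Idm_left: "hom C f X Y \<Longrightarrow> Cmp C (Idm C Y) f = f"
  using category unfolding category_def by blast

lemma Zer_hom: "X \<in> Ob C \<Longrightarrow> Y \<in> Ob C \<Longrightarrow> hom C (Zer C X Y) X Y"
  using preadditive unfolding preadditive_def by blast

lemma Add_hom: "hom C f X Y \<Longrightarrow> hom C g X Y \<Longrightarrow> hom C (Add C f g) X Y"
  using preadditive hom_Ob unfolding preadditive_def by meson

lemma Neg_hom: "hom C f X Y \<Longrightarrow> hom C (Neg C f) X Y"
  using preadditive hom_Ob unfolding preadditive_def by meson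

lemma Add_assoc: "hom C f X Y \<Longrightarrow> hom C g X Y \<Longrightarrow> hom C h X Y \<Longrightarrow>
    Add C (Add C f g) h = Add C f (Add C g h)"
  using preadditive hom_Ob unfolding preadditive_def by meson

lemma Add_commute: "hom C f X Y \<Longrightarrow> hom C g X Y \<Longrightarrow> Add C f g = Add C g f"
  using preadditive hom_Ob unfolding preadditive_def by meson

lemma Add_Zer: "hom C f X Y \<Longrightarrow> Add C f (Zer C X Y) = f"
  using preadditive hom_Ob unfolding preadditive_def by meson

lemma Add_Neg: "hom C f X Y \<Longrightarrow> Add C f (Neg C f) = Zer C X Y"
  using preadditive hom_Ob unfolding preadditive_def by meson

lemma Cmp_Add_left: "hom C f X Y \<Longrightarrow> hom C g X Y \<Longrightarrow> hom C h Y Z \<Longrightarrow>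
    Cmp C h (Add C f g) = Add C (Cmp C h f) (Cmp C h g)"
  using preadditive unfolding preadditive_def by blast

lemma Cmp_Add_right: "hom C h X Y \<Longrightarrow> hom C f Y Z \<Longrightarrow> hom C g Y Z \<Longrightarrow>
    Cmp C (Add C f g) h = Add C (Cmp C f h) (Cmp C g h)"
  using preadditive unfolding preadditive_def by blast

lemma Zer_Add: "hom C f X Y \<Longrightarrow> Add C (Zer C X Y) f = f"
  by (metis Add_commute Add_Zer hom_Ob Zer_hom)

lemma idempotent_Add_eq_Zer:
  assumes f: "hom C f X Y" and idem: "Add C f f = f"
  shows "f = Zer C X Y"
proof -
  have "f = Add C f (Add C f (Neg C f))" using Add_Zer Add_Neg f by simp
  also have "\<dots> = Add C (Add C f f) (Neg C f)" using Add_assoc Neg_hom f by simp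
  also have "\<dots> = Zer C X Y" using idem Add_Neg f by simp
  finally show ?thesis .
qed

lemma Cmp_Zer_right: "hom C h Y Z \<Longrightarrow> X \<in> Ob C \<Longrightarrow> Cmp C h (Zer C X Y) = Zer C X Z"
proof -
  assume h: "hom C h Y Z" and X: "X \<in> Ob C"
  have z: "hom C (Zer C X Y) X Y" using Zer_hom X h hom_Ob by blast
  have "Cmp C h (Zer C X Y) = Add C (Cmp C h (Zer C X Y)) (Cmp C h (Zer C X Y))"
    using Cmp_Add_left[OF z z h] Add_Zer[OF z] by simp
  then show ?thesis using idempotent_Add_eq_Zer Cmp_hom z h by metis
qed

lemma Cmp_Zer_left: "hom C h X Y \<Longrightarrow> Z \<in> Ob C \<Longrightarrow> Cmp C (Zer C Y Z) h = Zer C X Z"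
proof -
  assume h: "hom C h X Y" and Z: "Z \<in> Ob C"
  have z: "hom C (Zer C Y Z) Y Z" using Zer_hom Z h hom_Ob by blast
  have "Cmp C (Zer C Y Z) h = Add C (Cmp C (Zer C Y Z) h) (Cmp C (Zer C Y Z) h)"
    using Cmp_Add_right[OF h z z] Add_Zer[OF z] by simp
  then show ?thesis using idempotent_Add_eq_Zer Cmp_hom z h by metis
qed

text \<open>The same laws with the typing read off from \<open>Dom\<close> and \<open>Cod\<close>: together with \<open>hom_def\<close>
the simplifier can then reassociate and cancel composites of typed morphisms.\<close>

lemma Cmp_arr: "f \<in> Mor C \<Longrightarrow> g \<in> Mor C \<Longrightarrow> Cod C f = Dom C g \<Longrightarrow>
    Cmp C g f \<in> Mor C \<and> Dom C (Cmp C g f) = Dom C f \<and> Cod C (Cmp C g f) = Cod C g"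
  using Cmp_hom[of f "Dom C f" "Cod C f" g "Cod C g"] homI by (auto simp: hom_def)

lemma Cmp_assoc_arr: "f \<in> Mor C \<Longrightarrow> g \<in> Mor C \<Longrightarrow> h \<in> Mor C \<Longrightarrow>
    Cod C f = Dom C g \<Longrightarrow> Cod C g = Dom C h \<Longrightarrow> Cmp C (Cmp C h g) f = Cmp C h (Cmp C g f)"
  by (rule Cmp_assoc[OF homI[OF _ refl refl] homI[OF _ _ refl] homI[OF _ _ refl]]) simp_all

lemma Add_arr: "f \<in> Mor C \<Longrightarrow> g \<in> Mor C \<Longrightarrow> Dom C f = Dom C g \<Longrightarrow> Cod C f = Cod C g \<Longrightarrow>
    Add C f g \<in> Mor C \<and> Dom C (Add C f g) = Dom C f \<and> Cod C (Add C f g) = Cod C f"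
  using Add_hom[of f "Dom C f" "Cod C f" g] homI by (auto simp: hom_def)

lemma Zer_arr: "X \<in> Ob C \<Longrightarrow> Y \<in> Ob C \<Longrightarrow>
    Zer C X Y \<in> Mor C \<and> Dom C (Zer C X Y) = X \<and> Cod C (Zer C X Y) = Y"
  using Zer_hom by (auto simp: hom_def)

lemma Idm_arr: "X \<in> Ob C \<Longrightarrow> Idm C X \<in> Mor C \<and> Dom C (Idm C X) = X \<and> Cod C (Idm C X) = X"
  using Idm_hom by (auto simp: hom_def)

lemma Cmp_Idm_left_arr: "f \<in> Mor C \<Longrightarrow> Cod C f = Y \<Longrightarrow> Cmp C (Idm C Y) f = f"
  by (rule Cmp_Idm_left[OF homI[OF _ refl]])

lemma Cmp_Idm_right_arr: "f \<in> Mor C \<Longrightarrow> Dom C f = X \<Longrightarrow> Cmp C f (Idm C X) = f"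
  by (rule Cmp_Idm_right[OF homI[OF _ _ refl]])

lemma Cmp_Zer_right_arr: "h \<in> Mor C \<Longrightarrow> X \<in> Ob C \<Longrightarrow> Dom C h = Y \<Longrightarrow>
    Cmp C h (Zer C X Y) = Zer C X (Cod C h)"
  by (rule Cmp_Zer_right[OF homI[OF _ _ refl]])

lemma Cmp_Zer_left_arr: "h \<in> Mor C \<Longrightarrow> Z \<in> Ob C \<Longrightarrow> Cod C h = Y \<Longrightarrow>
    Cmp C (Zer C Y Z) h = Zer C (Dom C h) Z"
  by (rule Cmp_Zer_left[OF homI[OF _ refl]])

lemma Cmp_Add_left_arr: "f \<in> Mor C \<Longrightarrow> g \<in> Mor C \<Longrightarrow> h \<in> Mor C \<Longrightarrow>
    Dom C f = Dom C g \<Longrightarrow> Cod C f = Cod C g \<Longrightarrow> Cod C f = Dom C h \<Longrightarrow>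
    Cmp C h (Add C f g) = Add C (Cmp C h f) (Cmp C h g)"
  by (rule Cmp_Add_left[OF homI[OF _ refl refl] homI homI[OF _ _ refl]]) simp_all

lemma Cmp_Add_right_arr: "f \<in> Mor C \<Longrightarrow> g \<in> Mor C \<Longrightarrow> h \<in> Mor C \<Longrightarrow>
    Dom C f = Dom C g \<Longrightarrow> Cod C f = Cod C g \<Longrightarrow> Cod C h = Dom C f \<Longrightarrow>
    Cmp C (Add C f g) h = Add C (Cmp C f h) (Cmp C g h)"
  by (rule Cmp_Add_right[OF homI[OF _ refl refl] homI[OF _ _ refl] homI]) simp_all

lemma Add_Zer_arr: "f \<in> Mor C \<Longrightarrow> X = Dom C f \<Longrightarrow> Y = Cod C f \<Longrightarrow> Add C f (Zer C X Y) = f"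
  by (rule Add_Zer[OF homI]) simp_all

lemma Zer_Add_arr: "f \<in> Mor C \<Longrightarrow> X = Dom C f \<Longrightarrow> Y = Cod C f \<Longrightarrow> Add C (Zer C X Y) f = f"
  by (rule Zer_Add[OF homI]) simp_all

lemma Cmp_inverse_cancel_arr: "Cmp C g f = Idm C X \<Longrightarrow> f \<in> Mor C \<Longrightarrow> g \<in> Mor C \<Longrightarrow>
    Cod C f = Dom C g \<Longrightarrow> Dom C f = X \<Longrightarrow> h \<in> Mor C \<Longrightarrow> Cod C h = X \<Longrightarrow>
    Cmp C g (Cmp C f h) = h"
  using Cmp_assoc_arr[of h f g] Cmp_Idm_left_arr[of h X] by simp

lemma Cmp_zero_cancel_arr: "Cmp C g f = Zer C X Y \<Longrightarrow> Y \<in> Ob C \<Longrightarrow> f \<in> Mor C \<Longrightarrow>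
    g \<in> Mor C \<Longrightarrow> Cod C f = Dom C g \<Longrightarrow> Dom C f = X \<Longrightarrow> h \<in> Mor C \<Longrightarrow> Cod C h = X \<Longrightarrow>
    Cmp C g (Cmp C f h) = Zer C (Dom C h) Y"
  using Cmp_assoc_arr[of h f g] Cmp_Zer_left_arr[of h Y X] Mor_Ob by simp

lemmas arr_simps = Cmp_arr Cmp_assoc_arr Add_arr Zer_arr Idm_arr Cmp_Idm_left_arr
  Cmp_Idm_right_arr Cmp_Zer_right_arr Cmp_Zer_left_arr Mor_Ob hom_def

lemma is_kernelI:
  "hom C i A B \<Longrightarrow> hom C d B E \<Longrightarrow> Cmp C d i = Zer C A E \<Longrightarrow>
    (\<And>X g. hom C g X B \<Longrightarrow> Cmp C d g = Zer C X E \<Longrightarrow> \<exists>!h. hom C h X A \<and> Cmp C i h = g) \<Longrightarrow>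
    is_kernel C i d"
  unfolding is_kernel_def by blast

lemma is_kernelD:
  assumes "is_kernel C i d" "hom C i A B" "hom C d B E"
  shows "Cmp C d i = Zer C A E"
    and "\<And>X g. hom C g X B \<Longrightarrow> Cmp C d g = Zer C X E \<Longrightarrow> \<exists>!h. hom C h X A \<and> Cmp C i h = g"
proof -
  obtain A' B' E' where "hom C i A' B'" "hom C d B' E'" "Cmp C d i = Zer C A' E'"
    "\<forall>X g. hom C g X B' \<longrightarrow> Cmp C d g = Zer C X E' \<longrightarrow> (\<exists>!h. hom C h X A' \<and> Cmp C i h = g)"
    using assms(1) unfolding is_kernel_def by blast
  moreover from calculation have "A' = A" "B' = B" "E' = E" using assms(2,3) hom_unique by blast+
  ultimately show "Cmp C d i = Zer C A E"
    and "\<And>X g. hom C g X B \<Longrightarrow> Cmp C d g = Zer C X E \<Longrightarrow> \<exists>!h. hom C h X A \<and> Cmp C i h = g"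
    by auto
qed

lemma is_cokernelI:
  "hom C i A B \<Longrightarrow> hom C d B E \<Longrightarrow> Cmp C d i = Zer C A E \<Longrightarrow>
    (\<And>X g. hom C g B X \<Longrightarrow> Cmp C g i = Zer C A X \<Longrightarrow> \<exists>!h. hom C h E X \<and> Cmp C h d = g) \<Longrightarrow>
    is_cokernel C d i"
  unfolding is_cokernel_def by blast

lemma is_cokernelD:
  assumes "is_cokernel C d i" "hom C i A B" "hom C d B E"
  shows "Cmp C d i = Zer C A E"
    and "\<And>X g. hom C g B X \<Longrightarrow> Cmp C g i = Zer C A X \<Longrightarrow> \<exists>!h. hom C h E X \<and> Cmp C h d = g"
proof -
  obtain A' B' E' where "hom C i A' B'" "hom C d B' E'" "Cmp C d i = Zer C A' E'"
    "\<forall>X g. hom C g B' X \<longrightarrow> Cmp C g i = Zer C A' X \<longrightarrow> (\<exists>!h. hom C h E' X \<and> Cmp C h d = g)"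
    using assms(1) unfolding is_cokernel_def by blast
  moreover from calculation have "A' = A" "B' = B" "E' = E" using assms(2,3) hom_unique by blast+
  ultimately show "Cmp C d i = Zer C A E"
    and "\<And>X g. hom C g B X \<Longrightarrow> Cmp C g i = Zer C A X \<Longrightarrow> \<exists>!h. hom C h E X \<and> Cmp C h d = g"
    by auto
qed

lemma is_kernel_homE:
  assumes "is_kernel C i d" "hom C i A B"
  obtains E where "hom C d B E"
proof -
  obtain A' B' E' where "hom C i A' B'" "hom C d B' E'"
    using assms(1) unfolding is_kernel_def by blast
  then show ?thesis using that assms(2) hom_unique by blast
qed

lemma is_iso_inverse:
  assumes "is_iso C f" "hom C f X Y"
  obtains g where "hom C g Y X" "Cmp C g f = Idm C X" "Cmp C f g = Idm C Y"
proof -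
  obtain X' Y' g where "hom C f X' Y'" "hom C g Y' X'" "Cmp C g f = Idm C X'" "Cmp C f g = Idm C Y'"
    using assms(1) unfolding is_iso_def by blast
  moreover from calculation have "X' = X" "Y' = Y" using assms(2) hom_unique by blast+
  ultimately show ?thesis using that by blast
qed

lemma iso_seq_inverseE:
  assumes "iso_seq C (i, d) (i', d')"
  obtains A B E A' B' E' a b c a' b' c' where
    "hom C i A B" "hom C d B E" "hom C i' A' B'" "hom C d' B' E'"
    "hom C a A A'" "hom C b B B'" "hom C c E E'"
    "hom C a' A' A" "hom C b' B' B" "hom C c' E' E"
    "Cmp C a' a = Idm C A" "Cmp C a a' = Idm C A'"
    "Cmp C b' b = Idm C B" "Cmp C b b' = Idm C B'"
    "Cmp C c' c = Idm C E" "Cmp C c c' = Idm C E'"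
    "Cmp C b i = Cmp C i' a" "Cmp C c d = Cmp C d' b"
proof -
  obtain A B E A' B' E' a b c where h: "hom C i A B" "hom C d B E" "hom C i' A' B'"
      "hom C d' B' E'" "hom C a A A'" "hom C b B B'" "hom C c E E'"
    and isos: "is_iso C a" "is_iso C b" "is_iso C c"
    and sq: "Cmp C b i = Cmp C i' a" "Cmp C c d = Cmp C d' b"
    using assms unfolding iso_seq_def by auto
  obtain a' where "hom C a' A' A" "Cmp C a' a = Idm C A" "Cmp C a a' = Idm C A'"
    using is_iso_inverse[OF isos(1) h(5)] .
  moreover obtain b' where "hom C b' B' B" "Cmp C b' b = Idm C B" "Cmp C b b' = Idm C B'"
    using is_iso_inverse[OF isos(2) h(6)] .
  moreover obtain c' where "hom C c' E' E" "Cmp C c' c = Idm C E" "Cmp C c c' = Idm C E'"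
    using is_iso_inverse[OF isos(3) h(7)] .
  ultimately show ?thesis using that h sq by blast
qed

lemma is_kernel_iso_seq:
  assumes ker: "is_kernel C i d" and iso: "iso_seq C (i, d) (i', d')"
  shows "is_kernel C i' d'"
proof -
  obtain A B E A' B' E' a b c a' b' c' where H: "hom C i A B" "hom C d B E" "hom C i' A' B'"
      "hom C d' B' E'" "hom C a A A'" "hom C b B B'" "hom C c E E'"
      "hom C a' A' A" "hom C b' B' B" "hom C c' E' E"
    and inv: "Cmp C a' a = Idm C A" "Cmp C a a' = Idm C A'" "Cmp C b' b = Idm C B"
      "Cmp C b b' = Idm C B'" "Cmp C c' c = Idm C E" "Cmp C c c' = Idm C E'"
    and sq: "Cmp C b i = Cmp C i' a" "Cmp C c d = Cmp C d' b"
    by (rule iso_seq_inverseE[OF iso])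
  have di: "Cmp C d i = Zer C A E" using is_kernelD(1)[OF ker H(1,2)] .
  have i': "i' = Cmp C (Cmp C b i) a'" unfolding sq(1) using H inv(2) by (simp add: arr_simps)
  have zero: "Cmp C d' i' = Zer C A' E'"
  proof -
    have "Cmp C d' i' = Cmp C (Cmp C d' b) (Cmp C i a')" unfolding i' using H by (simp add: arr_simps)
    also have "\<dots> = Cmp C c (Cmp C (Cmp C d i) a')" unfolding sq(2)[symmetric] using H by (simp add: arr_simps)
    also have "\<dots> = Zer C A' E'" unfolding di using H by (simp add: arr_simps)
    finally show ?thesis .
  qed
  show ?thesis
  proof (rule is_kernelI[OF H(3,4) zero])
    fix X g assume g: "hom C g X B'" "Cmp C d' g = Zer C X E'"
    have "Cmp C d (Cmp C b' g) = Cmp C c' (Cmp C (Cmp C c d) (Cmp C b' g))"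
      using H g Cmp_inverse_cancel_arr[OF inv(5)] by (simp add: arr_simps)
    also have "\<dots> = Cmp C c' (Cmp C d' (Cmp C (Cmp C b b') g))" unfolding sq(2) using H g by (simp add: arr_simps)
    also have "\<dots> = Zer C X E" unfolding inv(4) using H g by (simp add: arr_simps)
    finally obtain h where h: "hom C h X A" "Cmp C i h = Cmp C b' g"
      and h_unique: "\<And>k. hom C k X A \<Longrightarrow> Cmp C i k = Cmp C b' g \<Longrightarrow> k = h"
      using is_kernelD(2)[OF ker H(1,2) Cmp_hom[OF g(1) H(9)]] by metis
    show "\<exists>!h. hom C h X A' \<and> Cmp C i' h = g"
    proof (rule ex1I[of _ "Cmp C a h"])
      have "Cmp C i' (Cmp C a h) = Cmp C (Cmp C b i) h"
        unfolding sq(1) using H h by (simp add: arr_simps)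
      also have "\<dots> = Cmp C b (Cmp C i h)" using H h by (simp add: arr_simps)
      also have "\<dots> = g" unfolding h(2) using H g Cmp_inverse_cancel_arr[OF inv(4)] by (simp add: arr_simps)
      finally show "hom C (Cmp C a h) X A' \<and> Cmp C i' (Cmp C a h) = g"
        using Cmp_hom h(1) H(5) by blast
    next
      fix k assume k: "hom C k X A' \<and> Cmp C i' k = g"
      have "Cmp C i (Cmp C a' k) = Cmp C b' (Cmp C (Cmp C b i) (Cmp C a' k))"
        using H k Cmp_inverse_cancel_arr[OF inv(3)] by (simp add: arr_simps)
      also have "\<dots> = Cmp C b' (Cmp C i' (Cmp C (Cmp C a a') k))" unfolding sq(1) using H k by (simp add: arr_simps)
      also have "\<dots> = Cmp C b' g" unfolding inv(2) using H k by (simp add: arr_simps)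
      finally have "Cmp C a' k = h" using h_unique Cmp_hom k H(8) by blast
      then show "k = Cmp C a h" using H k Cmp_inverse_cancel_arr[OF inv(2)] by (auto simp add: arr_simps)
    qed
  qed
qed

lemma comm_square_paste:
  assumes "hom C p X X1" "hom C f X Y" "hom C g Y Z" "hom C q Y Y1" "hom C r Z Z1"
    "hom C f1 X1 Y1" "hom C g1 Y1 Z1"
    and "Cmp C q f = Cmp C f1 p" "Cmp C r g = Cmp C g1 q"
  shows "Cmp C r (Cmp C g f) = Cmp C (Cmp C g1 f1) p"
proof -
  have "Cmp C r (Cmp C g f) = Cmp C (Cmp C g1 q) f"
    unfolding assms(9)[symmetric] using assms(2,3,5) by (simp add: arr_simps)
  also have "\<dots> = Cmp C g1 (Cmp C f1 p)"
    unfolding assms(8)[symmetric] using assms(2,4,7) by (simp add: arr_simps)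
  also have "\<dots> = Cmp C (Cmp C g1 f1) p" using assms(1,6,7) by (simp add: arr_simps)
  finally show ?thesis .
qed

lemma biproductD:
  assumes "biproduct C X1 X2 X i1 i2 p1 p2"
  shows "hom C i1 X1 X" "hom C i2 X2 X" "hom C p1 X X1" "hom C p2 X X2"
    "Cmp C p1 i1 = Idm C X1" "Cmp C p2 i2 = Idm C X2"
    "Cmp C p2 i1 = Zer C X1 X2" "Cmp C p1 i2 = Zer C X2 X1"
    "Add C (Cmp C i1 p1) (Cmp C i2 p2) = Idm C X"
  using assms unfolding biproduct_def by blast+

lemma biproduct_ext:
  assumes bp: "biproduct C X1 X2 X i1 i2 p1 p2" and f: "hom C f Y X" and g: "hom C g Y X"
    and "Cmp C p1 f = Cmp C p1 g" "Cmp C p2 f = Cmp C p2 g"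
  shows "f = g"
proof -
  note B = biproductD[OF bp]
  have decomp: "h = Add C (Cmp C i1 (Cmp C p1 h)) (Cmp C i2 (Cmp C p2 h))" if h: "hom C h Y X" for h
  proof -
    have "h = Cmp C (Add C (Cmp C i1 p1) (Cmp C i2 p2)) h" unfolding B(9) using h Cmp_Idm_left by simp
    also have "\<dots> = Add C (Cmp C i1 (Cmp C p1 h)) (Cmp C i2 (Cmp C p2 h))"
      using B(1-4) h by (simp add: arr_simps Cmp_Add_right_arr)
    finally show ?thesis .
  qed
  show ?thesis using decomp[OF f] decomp[OF g] assms(4,5) by simp
qed

lemma biproduct_proj_Add:
  assumes bp: "biproduct C X1 X2 X i1 i2 p1 p2" and x: "hom C x Z X1" and y: "hom C y Z X2"
  shows "Cmp C p1 (Add C (Cmp C i1 x) (Cmp C i2 y)) = x"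
    and "Cmp C p2 (Add C (Cmp C i1 x) (Cmp C i2 y)) = y"
proof -
  note B = biproductD[OF bp]
  show "Cmp C p1 (Add C (Cmp C i1 x) (Cmp C i2 y)) = x"
    using B x y Cmp_inverse_cancel_arr[OF B(5)] Cmp_zero_cancel_arr[OF B(8)]
    by (simp add: arr_simps Cmp_Add_left_arr Add_Zer_arr)
  show "Cmp C p2 (Add C (Cmp C i1 x) (Cmp C i2 y)) = y"
    using B x y Cmp_inverse_cancel_arr[OF B(6)] Cmp_zero_cancel_arr[OF B(7)]
    by (simp add: arr_simps Cmp_Add_left_arr Zer_Add_arr)
qed

lemma biproduct_ex1_pair:
  assumes bp: "biproduct C X1 X2 X i1 i2 p1 p2" and x: "hom C x Z X1" and y: "hom C y Z X2"
  shows "\<exists>!h. hom C h Z X \<and> Cmp C p1 h = x \<and> Cmp C p2 h = y"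
proof (rule ex1I[of _ "Add C (Cmp C i1 x) (Cmp C i2 y)"])
  note B = biproductD[OF bp]
  show "hom C (Add C (Cmp C i1 x) (Cmp C i2 y)) Z X \<and>
      Cmp C p1 (Add C (Cmp C i1 x) (Cmp C i2 y)) = x \<and> Cmp C p2 (Add C (Cmp C i1 x) (Cmp C i2 y)) = y"
    using biproduct_proj_Add[OF bp x y] Add_hom Cmp_hom B(1,2) x y by blast
  then show "h = Add C (Cmp C i1 x) (Cmp C i2 y)" if "hom C h Z X \<and> Cmp C p1 h = x \<and> Cmp C p2 h = y" for h
    using biproduct_ext[OF bp] that by metis
qed

lemma dsum_seq_diagonalE:
  assumes "dsum_seq C (i, d) (i1, d1) (i2, d2)"
  obtains A1 A2 A B1 B2 B E1 E2 E a1 a2 pa1 pa2 b1 b2 pb1 pb2 e1 e2 pe1 pe2 where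
    "hom C i1 A1 B1" "hom C d1 B1 E1" "hom C i2 A2 B2" "hom C d2 B2 E2"
    "biproduct C A1 A2 A a1 a2 pa1 pa2" "biproduct C B1 B2 B b1 b2 pb1 pb2"
    "biproduct C E1 E2 E e1 e2 pe1 pe2" "hom C i A B" "hom C d B E"
    "Cmp C pb1 i = Cmp C i1 pa1" "Cmp C pb2 i = Cmp C i2 pa2"
    "Cmp C pe1 d = Cmp C d1 pb1" "Cmp C pe2 d = Cmp C d2 pb2"
proof -
  obtain A1 A2 A B1 B2 B E1 E2 E a1 a2 pa1 pa2 b1 b2 pb1 pb2 e1 e2 pe1 pe2 where
    h: "hom C i1 A1 B1" "hom C d1 B1 E1" "hom C i2 A2 B2" "hom C d2 B2 E2" and
    bA: "biproduct C A1 A2 A a1 a2 pa1 pa2" and bB: "biproduct C B1 B2 B b1 b2 pb1 pb2" and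
    bE: "biproduct C E1 E2 E e1 e2 pe1 pe2" and
    i: "i = Add C (Cmp C b1 (Cmp C i1 pa1)) (Cmp C b2 (Cmp C i2 pa2))" and
    d: "d = Add C (Cmp C e1 (Cmp C d1 pb1)) (Cmp C e2 (Cmp C d2 pb2))"
    using assms unfolding dsum_seq_def by auto
  note BA = biproductD(1-4)[OF bA] and BB = biproductD(1-4)[OF bB]
  note H = h BA BB biproductD(1-4)[OF bE]
  have "hom C i A B" "hom C d B E" unfolding i d using H by (simp_all add: arr_simps)
  moreover have "Cmp C pb1 i = Cmp C i1 pa1" "Cmp C pb2 i = Cmp C i2 pa2"
    unfolding i using biproduct_proj_Add[OF bB Cmp_hom[OF BA(3) h(1)] Cmp_hom[OF BA(4) h(3)]] .
  moreover have "Cmp C pe1 d = Cmp C d1 pb1" "Cmp C pe2 d = Cmp C d2 pb2"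
    unfolding d using biproduct_proj_Add[OF bE Cmp_hom[OF BB(3) h(2)] Cmp_hom[OF BB(4) h(4)]] .
  ultimately show ?thesis by (rule that[OF h bA bB bE])
qed

lemma is_kernel_factor_through_square:
  assumes ker: "is_kernel C i1 d1" and hi1: "hom C i1 A1 B1" and hd1: "hom C d1 B1 E1"
    and hp: "hom C p B B1" and hq: "hom C q E E1" and hd: "hom C d B E"
    and sq: "Cmp C q d = Cmp C d1 p"
    and g: "hom C g X B" "Cmp C d g = Zer C X E"
  shows "\<exists>!h. hom C h X A1 \<and> Cmp C i1 h = Cmp C p g"
proof -
  have "Cmp C d1 (Cmp C p g) = Cmp C q (Cmp C d g)"
    using Cmp_assoc[OF g(1) hp hd1] Cmp_assoc[OF g(1) hd hq] sq by simp
  also have "\<dots> = Zer C X E1" using g Cmp_Zer_right[OF hq] hom_Ob by simp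
  finally show ?thesis using is_kernelD(2)[OF ker hi1 hd1 Cmp_hom[OF g(1) hp]] by blast
qed

lemma is_kernel_dsum_seq:
  assumes ds: "dsum_seq C (i, d) (i1, d1) (i2, d2)"
    and ker1: "is_kernel C i1 d1" and ker2: "is_kernel C i2 d2"
  shows "is_kernel C i d"
proof -
  obtain A1 A2 A B1 B2 B E1 E2 E a1 a2 pa1 pa2 b1 b2 pb1 pb2 e1 e2 pe1 pe2 where
    h: "hom C i1 A1 B1" "hom C d1 B1 E1" "hom C i2 A2 B2" "hom C d2 B2 E2" and
    bA: "biproduct C A1 A2 A a1 a2 pa1 pa2" and bB: "biproduct C B1 B2 B b1 b2 pb1 pb2" and
    bE: "biproduct C E1 E2 E e1 e2 pe1 pe2" and hi: "hom C i A B" and hd: "hom C d B E" and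
    sq: "Cmp C pb1 i = Cmp C i1 pa1" "Cmp C pb2 i = Cmp C i2 pa2"
      "Cmp C pe1 d = Cmp C d1 pb1" "Cmp C pe2 d = Cmp C d2 pb2"
    by (rule dsum_seq_diagonalE[OF ds])
  note BA = biproductD[OF bA] and BB = biproductD[OF bB] and BE = biproductD[OF bE]
  note H = h BA(1-4) BB(1-4) BE(1-4) hi hd
  have "Cmp C d i = Zer C A E"
  proof (rule biproduct_ext[OF bE, of _ A])
    show "Cmp C pe1 (Cmp C d i) = Cmp C pe1 (Zer C A E)"
      using comm_square_paste[OF _ hi hd _ _ h(1,2) sq(1,3)] is_kernelD(1)[OF ker1 h(1,2)] H
      by (simp add: arr_simps)
    show "Cmp C pe2 (Cmp C d i) = Cmp C pe2 (Zer C A E)"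
      using comm_square_paste[OF _ hi hd _ _ h(3,4) sq(2,4)] is_kernelD(1)[OF ker2 h(3,4)] H
      by (simp add: arr_simps)
  qed (use H in \<open>simp_all add: arr_simps\<close>)
  then show ?thesis
  proof (rule is_kernelI[OF hi hd])
    fix X g assume g: "hom C g X B" "Cmp C d g = Zer C X E"
    obtain h1 where h1: "hom C h1 X A1" "Cmp C i1 h1 = Cmp C pb1 g"
      and h1_unique: "\<And>k. hom C k X A1 \<Longrightarrow> Cmp C i1 k = Cmp C pb1 g \<Longrightarrow> k = h1"
      using is_kernel_factor_through_square[OF ker1 h(1,2) BB(3) BE(3) hd sq(3) g] by blast
    obtain h2 where h2: "hom C h2 X A2" "Cmp C i2 h2 = Cmp C pb2 g"
      and h2_unique: "\<And>k. hom C k X A2 \<Longrightarrow> Cmp C i2 k = Cmp C pb2 g \<Longrightarrow> k = h2"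
      using is_kernel_factor_through_square[OF ker2 h(3,4) BB(4) BE(4) hd sq(4) g] by blast
    have proj_i: "Cmp C pb1 (Cmp C i k) = Cmp C i1 (Cmp C pa1 k)"
      "Cmp C pb2 (Cmp C i k) = Cmp C i2 (Cmp C pa2 k)" if "hom C k X A" for k
      using Cmp_assoc[OF that hi BB(3)] Cmp_assoc[OF that BA(3) h(1)]
        Cmp_assoc[OF that hi BB(4)] Cmp_assoc[OF that BA(4) h(3)] sq(1,2) by simp_all
    have "Cmp C i k = g \<longleftrightarrow> Cmp C pa1 k = h1 \<and> Cmp C pa2 k = h2" if k: "hom C k X A" for k
    proof
      assume "Cmp C i k = g"
      then show "Cmp C pa1 k = h1 \<and> Cmp C pa2 k = h2"
        using h1_unique[OF Cmp_hom[OF k BA(3)]] h2_unique[OF Cmp_hom[OF k BA(4)]] proj_i[OF k] by simp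
    next
      assume "Cmp C pa1 k = h1 \<and> Cmp C pa2 k = h2"
      then show "Cmp C i k = g"
        using biproduct_ext[OF bB Cmp_hom[OF k hi] g(1)] proj_i[OF k] h1(2) h2(2) by simp
    qed
    then show "\<exists>!h. hom C h X A \<and> Cmp C i h = g"
      using biproduct_ex1_pair[OF bA h1(1) h2(1)] by blast
  qed
qed

lemma kc_pair_Idm_Zer:
  assumes Z: "zero_object C Z" and A: "A \<in> Ob C"
  shows "kc_pair C (Idm C A) (Zer C A Z)"
proof -
  have ZO: "Z \<in> Ob C" and from_Z_unique: "\<And>X. X \<in> Ob C \<Longrightarrow> \<exists>!f. hom C f Z X"
    using Z unfolding zero_object_def by blast+
  have hi: "hom C (Idm C A) A A" using Idm_hom A .
  have hd: "hom C (Zer C A Z) A Z" using Zer_hom A ZO .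
  have zero: "Cmp C (Zer C A Z) (Idm C A) = Zer C A Z" using Cmp_Idm_right hd .
  have "is_kernel C (Idm C A) (Zer C A Z)"
  proof (rule is_kernelI[OF hi hd zero])
    fix X g assume "hom C g X A"
    then show "\<exists>!h. hom C h X A \<and> Cmp C (Idm C A) h = g"
      using Cmp_Idm_left by (intro ex1I[of _ g]) auto
  qed
  moreover have "is_cokernel C (Zer C A Z) (Idm C A)"
  proof (rule is_cokernelI[OF hi hd zero])
    fix X g assume g: "hom C g A X" "Cmp C g (Idm C A) = Zer C A X"
    have X: "X \<in> Ob C" using g hom_Ob by blast
    have "g = Zer C A X" using g(2) Cmp_Idm_right[OF g(1)] by simp
    then have "Cmp C (Zer C Z X) (Zer C A Z) = g" using Cmp_Zer_left[OF hd X] by simp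
    then show "\<exists>!h. hom C h Z X \<and> Cmp C h (Zer C A Z) = g"
      using from_Z_unique[OF X] Zer_hom[OF ZO X] by (intro ex1I[of _ "Zer C Z X"]) blast+
  qed
  ultimately show ?thesis unfolding kc_pair_def by blast
qed

lemma is_pushoutD:
  assumes "is_pushout C f t h' f'" "hom C f X Y" "hom C t X X'"
  obtains P where "hom C h' Y P" "hom C f' X' P" "Cmp C h' f = Cmp C f' t"
    "\<And>Q u v. hom C u Y Q \<Longrightarrow> hom C v X' Q \<Longrightarrow> Cmp C u f = Cmp C v t \<Longrightarrow>
      \<exists>!w. hom C w P Q \<and> Cmp C w h' = u \<and> Cmp C w f' = v"
proof -
  obtain X0 Y0 X0' P where "hom C f X0 Y0" "hom C t X0 X0'" "hom C h' Y0 P" "hom C f' X0' P"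
    "Cmp C h' f = Cmp C f' t"
    "\<forall>Q u v. hom C u Y0 Q \<longrightarrow> hom C v X0' Q \<longrightarrow> Cmp C u f = Cmp C v t \<longrightarrow>
      (\<exists>!w. hom C w P Q \<and> Cmp C w h' = u \<and> Cmp C w f' = v)"
    using assms(1) unfolding is_pushout_def by blast
  moreover from calculation have "X0 = X" "Y0 = Y" "X0' = X'" using assms(2,3) hom_unique by blast+
  ultimately show ?thesis using that by auto
qed

lemma is_cokernel_pushout:
  assumes cok: "is_cokernel C d i" and hi: "hom C i A B" and hd: "hom C d B E"
    and po: "is_pushout C i t h' f'" and ht: "hom C t A X"
    and hh': "hom C h' B S" and hf': "hom C f' X S" and hd': "hom C d' S E"
    and d'h': "Cmp C d' h' = d" and d'f': "Cmp C d' f' = Zer C X E"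
  shows "is_cokernel C d' f'"
proof (rule is_cokernelI[OF hf' hd' d'f'])
  obtain P where P: "hom C h' B P" "hom C f' X P" "Cmp C h' i = Cmp C f' t"
    and univ: "\<And>Q u v. hom C u B Q \<Longrightarrow> hom C v X Q \<Longrightarrow> Cmp C u i = Cmp C v t \<Longrightarrow>
      \<exists>!w. hom C w P Q \<and> Cmp C w h' = u \<and> Cmp C w f' = v"
    using is_pushoutD[OF po hi ht] by blast
  have "P = S" using P(1) hh' hom_unique by blast
  note univ = univ[unfolded this]
  fix Y g assume g: "hom C g S Y" "Cmp C g f' = Zer C X Y"
  have Y: "Y \<in> Ob C" using g hom_Ob by blast
  have gh': "hom C (Cmp C g h') B Y" using Cmp_hom hh' g(1) .
  have "Cmp C (Cmp C g h') i = Cmp C (Cmp C g f') t"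
    using Cmp_assoc[OF hi hh' g(1)] Cmp_assoc[OF ht hf' g(1)] P(3) by simp
  then have g_square: "Cmp C (Cmp C g h') i = Cmp C (Zer C X Y) t"
    using g(2) by simp
  then have "Cmp C (Cmp C g h') i = Zer C A Y"
    using Cmp_Zer_left[OF ht Y] by simp
  then obtain u where u: "hom C u E Y" "Cmp C u d = Cmp C g h'"
    and u_unique: "\<And>k. hom C k E Y \<Longrightarrow> Cmp C k d = Cmp C g h' \<Longrightarrow> k = u"
    using is_cokernelD(2)[OF cok hi hd gh'] by blast
  show "\<exists>!h. hom C h E Y \<and> Cmp C h d' = g"
  proof (rule ex1I[of _ u])
    have "Cmp C (Cmp C u d') h' = Cmp C g h'"
      using Cmp_assoc[OF hh' hd' u(1)] d'h' u(2) by simp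
    moreover have "Cmp C (Cmp C u d') f' = Zer C X Y"
      using Cmp_assoc[OF hf' hd' u(1)] d'f' Cmp_Zer_right[OF u(1)] hom_Ob[OF ht] by simp
    ultimately have "Cmp C u d' = g"
      using univ[OF gh' Zer_hom[OF hom_Ob[OF ht, THEN conjunct2] Y] g_square]
        Cmp_hom[OF hd' u(1)] g by blast
    then show "hom C u E Y \<and> Cmp C u d' = g" using u by blast
  next
    fix k assume k: "hom C k E Y \<and> Cmp C k d' = g"
    then have "Cmp C k d = Cmp C g h'" using Cmp_assoc[OF hh' hd'] d'h' by force
    then show "k = u" using u_unique k by blast
  qed
qed

lemma is_kernel_cokernel:
  assumes ker: "is_kernel C f k" and cok: "is_cokernel C d f"
    and hf: "hom C f X S" and hd: "hom C d S E" and hk: "hom C k S K"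
  shows "is_kernel C f d"
proof (rule is_kernelI[OF hf hd is_cokernelD(1)[OF cok hf hd]])
  obtain v where v: "hom C v E K" "Cmp C v d = k"
    using is_cokernelD(2)[OF cok hf hd hk is_kernelD(1)[OF ker hf hk]] by blast
  fix Y g assume g: "hom C g Y S" "Cmp C d g = Zer C Y E"
  have "Cmp C k g = Zer C Y K"
    using v Cmp_assoc[OF g(1) hd v(1)] g(2) Cmp_Zer_right[OF v(1)] hom_Ob[OF g(1)] by simp
  then show "\<exists>!h. hom C h Y X \<and> Cmp C f h = g" using is_kernelD(2)[OF ker hf hk g(1)] by blast
qed

lemma pushout_kc_pair:
  assumes kc: "kc_pair C i d" and hi: "hom C i A B" and ht: "hom C t A X"
    and po: "is_pushout C i t h' f'" and f'_kernel: "is_kernel C f' k"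
    and "d \<in> D"
    and D_cancel: "\<And>a b A B E. hom C a A B \<Longrightarrow> hom C b B E \<Longrightarrow> Cmp C b a \<in> D \<Longrightarrow>
      (\<exists>k. is_kernel C k b) \<Longrightarrow> b \<in> D"
  shows "\<exists>d'. kc_pair C f' d' \<and> d' \<in> D"
proof -
  obtain S where hh': "hom C h' B S" and hf': "hom C f' X S" and sq: "Cmp C h' i = Cmp C f' t"
    and univ: "\<And>Q u v. hom C u B Q \<Longrightarrow> hom C v X Q \<Longrightarrow> Cmp C u i = Cmp C v t \<Longrightarrow>
      \<exists>!w. hom C w S Q \<and> Cmp C w h' = u \<and> Cmp C w f' = v"
    using is_pushoutD[OF po hi ht] by blast
  have ker: "is_kernel C i d" and cok: "is_cokernel C d i" using kc unfolding kc_pair_def by auto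
  obtain E where hd: "hom C d B E" using is_kernel_homE[OF ker hi] .
  obtain K where hk: "hom C k S K" using is_kernel_homE[OF f'_kernel hf'] .
  have E: "E \<in> Ob C" and X: "X \<in> Ob C" using hd ht hom_Ob by blast+
  have "Cmp C d i = Cmp C (Zer C X E) t"
    using is_kernelD(1)[OF ker hi hd] Cmp_Zer_left[OF ht E] by simp
  then obtain d' where hd': "hom C d' S E" and d'h': "Cmp C d' h' = d"
    and d'f': "Cmp C d' f' = Zer C X E"
    using univ[OF hd Zer_hom[OF X E]] by blast
  have "is_cokernel C d' f'"
    using is_cokernel_pushout[OF cok hi hd po ht hh' hf' hd' d'h' d'f'] .
  moreover from this have "is_kernel C f' d'"
    using is_kernel_cokernel[OF f'_kernel _ hf' hd' hk] by blast
  moreover have "d' \<in> D"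
    using D_cancel[OF hh' hd'] d'h' \<open>d \<in> D\<close> \<open>is_kernel C f' d'\<close> by blast
  ultimately show ?thesis unfolding kc_pair_def by blast
qed

end

definition opc :: "('o, 'm) addcat \<Rightarrow> ('o, 'm) addcat" where
  "opc C = \<lparr>Ob = Ob C, Mor = Mor C, Dom = Cod C, Cod = Dom C, Cmp = (\<lambda>g f. Cmp C f g),
     Idm = Idm C, Add = Add C, Neg = Neg C, Zer = (\<lambda>X Y. Zer C Y X)\<rparr>"

lemma opc_simps [simp]:
  "Ob (opc C) = Ob C" "Mor (opc C) = Mor C" "Dom (opc C) = Cod C" "Cod (opc C) = Dom C"
  "Cmp (opc C) g f = Cmp C f g" "Idm (opc C) = Idm C" "Add (opc C) = Add C" "Neg (opc C) = Neg C"
  "Zer (opc C) X Y = Zer C Y X"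
  by (simp_all add: opc_def)

lemma hom_opc [simp]: "hom (opc C) f X Y = hom C f Y X"
  by (auto simp: hom_def)

lemma is_kernel_opc: "is_kernel (opc C) f g = is_cokernel C f g"
  unfolding is_kernel_def is_cokernel_def by auto

lemma is_cokernel_opc: "is_cokernel (opc C) f g = is_kernel C f g"
  unfolding is_kernel_def is_cokernel_def by auto

lemma kc_pair_opc: "kc_pair (opc C) d i = kc_pair C i d"
  unfolding kc_pair_def is_kernel_opc is_cokernel_opc by auto

lemma is_pushout_opc: "is_pushout (opc C) f h h' f' = is_pullback C f h h' f'"
  unfolding is_pushout_def is_pullback_def by auto

lemma zero_object_opc: "zero_object (opc C) Z = zero_object C Z"
  unfolding zero_object_def by auto

lemma is_iso_opc: "is_iso (opc C) f = is_iso C f"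
  unfolding is_iso_def by auto

lemma biproduct_opc: "biproduct (opc C) X1 X2 X i1 i2 p1 p2 = biproduct C X1 X2 X p1 p2 i1 i2"
  unfolding biproduct_def by auto

context additive_category
begin

lemma additive_category_opc: "additive_category (opc C)"
proof -
  have "category (opc C)"
    unfolding category_def using Mor_Ob Idm_hom Cmp_hom Cmp_assoc Cmp_Idm_left Cmp_Idm_right
    by simp
  then have "preadditive (opc C)"
    unfolding preadditive_def
    using Zer_hom Add_hom Neg_hom Add_assoc Add_commute Add_Zer Add_Neg Cmp_Add_left Cmp_Add_right
    by simp
  moreover have "\<exists>Z. zero_object (opc C) Z"
    using additive unfolding additive_def zero_object_opc by blast
  moreover have "\<forall>X1\<in>Ob (opc C). \<forall>X2\<in>Ob (opc C). \<exists>X i1 i2 p1 p2. biproduct (opc C) X1 X2 X i1 i2 p1 p2"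
    using additive unfolding additive_def biproduct_opc by fastforce
  ultimately show ?thesis unfolding additive_category_def additive_def by blast
qed

lemma iso_seq_opc:
  assumes "iso_seq C (i, d) (i', d')"
  shows "iso_seq (opc C) (d, i) (d', i')"
proof -
  obtain A B E A' B' E' a b c a' b' c' where H: "hom C i A B" "hom C d B E" "hom C i' A' B'"
      "hom C d' B' E'" "hom C a A A'" "hom C b B B'" "hom C c E E'"
      "hom C a' A' A" "hom C b' B' B" "hom C c' E' E"
    and inv: "Cmp C a' a = Idm C A" "Cmp C a a' = Idm C A'" "Cmp C b' b = Idm C B"
      "Cmp C b b' = Idm C B'" "Cmp C c' c = Idm C E" "Cmp C c c' = Idm C E'"
    and sq: "Cmp C b i = Cmp C i' a" "Cmp C c d = Cmp C d' b"
    by (rule iso_seq_inverseE[OF assms])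
  have "is_iso C a'" "is_iso C b'" "is_iso C c'"
    unfolding is_iso_def using H inv by blast+
  moreover have "Cmp C d b' = Cmp C c' d'"
  proof -
    have "Cmp C c' d' = Cmp C c' (Cmp C (Cmp C d' b) b')" using H inv(4) by (simp add: arr_simps)
    also have "\<dots> = Cmp C d b'"
      unfolding sq(2)[symmetric] using H Cmp_inverse_cancel_arr[OF inv(5)] by (simp add: arr_simps)
    finally show ?thesis by simp
  qed
  moreover have "Cmp C i a' = Cmp C b' i'"
  proof -
    have "Cmp C b' i' = Cmp C b' (Cmp C (Cmp C i' a) a')" using H inv(2) by (simp add: arr_simps)
    also have "\<dots> = Cmp C i a'"
      unfolding sq(1)[symmetric] using H Cmp_inverse_cancel_arr[OF inv(3)] by (simp add: arr_simps)
    finally show ?thesis by simp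
  qed
  ultimately show ?thesis unfolding iso_seq_def using H by (simp add: is_iso_opc) blast
qed

lemma dsum_seq_opc:
  assumes "dsum_seq C (i, d) (i1, d1) (i2, d2)"
  shows "dsum_seq (opc C) (d, i) (d1, i1) (d2, i2)"
proof -
  obtain A1 A2 A B1 B2 B E1 E2 E a1 a2 pa1 pa2 b1 b2 pb1 pb2 e1 e2 pe1 pe2 where
    h: "hom C i1 A1 B1" "hom C d1 B1 E1" "hom C i2 A2 B2" "hom C d2 B2 E2" and
    bA: "biproduct C A1 A2 A a1 a2 pa1 pa2" and bB: "biproduct C B1 B2 B b1 b2 pb1 pb2" and
    bE: "biproduct C E1 E2 E e1 e2 pe1 pe2" and
    i: "i = Add C (Cmp C b1 (Cmp C i1 pa1)) (Cmp C b2 (Cmp C i2 pa2))" and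
    d: "d = Add C (Cmp C e1 (Cmp C d1 pb1)) (Cmp C e2 (Cmp C d2 pb2))"
    using assms unfolding dsum_seq_def by auto
  note H = h biproductD(1-4)[OF bA] biproductD(1-4)[OF bB] biproductD(1-4)[OF bE]
  have "d = Add (opc C) (Cmp (opc C) pb1 (Cmp (opc C) d1 e1)) (Cmp (opc C) pb2 (Cmp (opc C) d2 e2))"
    "i = Add (opc C) (Cmp (opc C) pa1 (Cmp (opc C) i1 b1)) (Cmp (opc C) pa2 (Cmp (opc C) i2 b2))"
    unfolding i d using H by (simp_all add: arr_simps)
  moreover have "biproduct (opc C) A1 A2 A pa1 pa2 a1 a2" "biproduct (opc C) B1 B2 B pb1 pb2 b1 b2"
    "biproduct (opc C) E1 E2 E pe1 pe2 e1 e2"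
    using bA bB bE by (simp_all add: biproduct_opc)
  moreover have "hom (opc C) d1 E1 B1" "hom (opc C) i1 B1 A1" "hom (opc C) d2 E2 B2"
    "hom (opc C) i2 B2 A2"
    using h by simp_all
  ultimately show ?thesis unfolding dsum_seq_def prod.case by - (intro exI conjI, assumption+)
qed

lemma kc_pair_iso_seq:
  assumes kc: "kc_pair C i d" and iso: "iso_seq C (i, d) (i', d')"
  shows "kc_pair C i' d'"
proof -
  interpret op: additive_category "opc C" by (rule additive_category_opc)
  have "is_kernel C i' d'"
    using is_kernel_iso_seq[OF _ iso] kc unfolding kc_pair_def by blast
  moreover have "is_kernel (opc C) d' i'"
    using op.is_kernel_iso_seq[OF _ iso_seq_opc[OF iso]] kc unfolding kc_pair_def is_kernel_opc by blast
  ultimately show ?thesis unfolding kc_pair_def is_kernel_opc by blast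
qed

lemma kc_pair_dsum_seq:
  assumes ds: "dsum_seq C (i, d) (i1, d1) (i2, d2)"
    and kc1: "kc_pair C i1 d1" and kc2: "kc_pair C i2 d2"
  shows "kc_pair C i d"
proof -
  interpret op: additive_category "opc C" by (rule additive_category_opc)
  have "is_kernel C i d"
    using is_kernel_dsum_seq[OF ds] kc1 kc2 unfolding kc_pair_def by blast
  moreover have "is_kernel (opc C) d i"
    using op.is_kernel_dsum_seq[OF dsum_seq_opc[OF ds]] kc1 kc2
    unfolding kc_pair_def is_kernel_opc by blast
  ultimately show ?thesis unfolding kc_pair_def is_kernel_opc by blast
qed

lemma kc_pair_Zer_Idm:
  assumes "zero_object C Z" and "A \<in> Ob C"
  shows "kc_pair C (Zer C Z A) (Idm C A)"
proof -
  interpret op: additive_category "opc C" by (rule additive_category_opc)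
  show ?thesis
    using op.kc_pair_Idm_Zer[of Z A] assms by (simp add: zero_object_opc kc_pair_opc)
qed

lemma pullback_kc_pair:
  assumes kc: "kc_pair C i h" and hh: "hom C h B E" and ht: "hom C t X E"
    and pb: "is_pullback C h t t' g'" and g'_cokernel: "is_cokernel C g' c"
    and "i \<in> I"
    and I_cancel: "\<And>a b A B E. hom C a A B \<Longrightarrow> hom C b B E \<Longrightarrow> Cmp C b a \<in> I \<Longrightarrow>
      (\<exists>c. is_cokernel C c a) \<Longrightarrow> a \<in> I"
  shows "\<exists>i'. kc_pair C i' g' \<and> i' \<in> I"
proof -
  interpret op: additive_category "opc C" by (rule additive_category_opc)
  have "\<And>a b A B E. hom (opc C) a A B \<Longrightarrow> hom (opc C) b B E \<Longrightarrow> Cmp (opc C) b a \<in> I \<Longrightarrow>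
      (\<exists>k. is_kernel (opc C) k b) \<Longrightarrow> b \<in> I"
    using I_cancel unfolding hom_opc opc_simps is_kernel_opc by blast
  then have "\<exists>i'. kc_pair (opc C) g' i' \<and> i' \<in> I"
    using op.pushout_kc_pair[of h i E B t X t' g' c I] assms
    by (simp add: kc_pair_opc is_pushout_opc is_kernel_opc)
  then show ?thesis by (simp add: kc_pair_opc)
qed

end

lemma iso_seq_iso_arrows:
  assumes "iso_seq C (i, d) (i', d')"
  shows "iso_arrows C i i'" and "iso_arrows C d d'"
proof -
  obtain A B E A' B' E' a b c where "hom C i A B" "hom C d B E" "hom C i' A' B'" "hom C d' B' E'"
    "hom C a A A'" "hom C b B B'" "hom C c E E'" "is_iso C a" "is_iso C b" "is_iso C c"
    "Cmp C b i = Cmp C i' a" "Cmp C c d = Cmp C d' b"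
    using assms unfolding iso_seq_def by auto
  then show "iso_arrows C i i'" and "iso_arrows C d d'"
    unfolding iso_arrows_def by (metis, metis)
qed

lemma dsum_seq_dsum_mor:
  assumes "dsum_seq C (i, d) (i1, d1) (i2, d2)"
  shows "dsum_mor C i i1 i2" and "dsum_mor C d d1 d2"
  using assms unfolding dsum_seq_def dsum_mor_def by (auto, blast+)

lemma right_weakly_exactD:
  assumes "right_weakly_exact C I"
  shows "f \<in> I \<Longrightarrow> \<exists>k. is_kernel C f k"
    and "f \<in> I \<Longrightarrow> iso_arrows C f f' \<Longrightarrow> f' \<in> I"
    and "X \<in> Ob C \<Longrightarrow> Idm C X \<in> I"
    and "zero_object C Z \<Longrightarrow> X \<in> Ob C \<Longrightarrow> Zer C Z X \<in> I"
    and "f \<in> I \<Longrightarrow> hom C f X Y \<Longrightarrow> hom C t X X' \<Longrightarrow> \<exists>h' f'. is_pushout C f t h' f'"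
    and "f \<in> I \<Longrightarrow> hom C f X Y \<Longrightarrow> hom C t X X' \<Longrightarrow> is_pushout C f t h' f' \<Longrightarrow> f' \<in> I"
    and "hom C a A B \<Longrightarrow> hom C b B E \<Longrightarrow> Cmp C b a \<in> I \<Longrightarrow> \<exists>c. is_cokernel C c a \<Longrightarrow> a \<in> I"
    and "f1 \<in> I \<Longrightarrow> f2 \<in> I \<Longrightarrow> dsum_mor C f f1 f2 \<Longrightarrow> f \<in> I"
  using assms unfolding right_weakly_exact_def by meson+

lemma left_weakly_exactD:
  assumes "left_weakly_exact C D"
  shows "g \<in> D \<Longrightarrow> \<exists>k. is_cokernel C g k"
    and "g \<in> D \<Longrightarrow> iso_arrows C g g' \<Longrightarrow> g' \<in> D"
    and "X \<in> Ob C \<Longrightarrow> Idm C X \<in> D"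
    and "zero_object C Z \<Longrightarrow> X \<in> Ob C \<Longrightarrow> Zer C X Z \<in> D"
    and "g \<in> D \<Longrightarrow> hom C g Y Z \<Longrightarrow> hom C t X Z \<Longrightarrow> \<exists>t' g'. is_pullback C g t t' g'"
    and "g \<in> D \<Longrightarrow> hom C g Y Z \<Longrightarrow> hom C t X Z \<Longrightarrow> is_pullback C g t t' g' \<Longrightarrow> g' \<in> D"
    and "hom C a A B \<Longrightarrow> hom C b B E \<Longrightarrow> Cmp C b a \<in> D \<Longrightarrow> \<exists>k. is_kernel C k b \<Longrightarrow> b \<in> D"
    and "g1 \<in> D \<Longrightarrow> g2 \<in> D \<Longrightarrow> dsum_mor C g g1 g2 \<Longrightarrow> g \<in> D"
  using assms unfolding left_weakly_exact_def by meson+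

lemma (in additive_category) pushout_admissible:
  assumes I: "right_weakly_exact C I" and D: "left_weakly_exact C D"
    and kc: "kc_pair C i d" and "i \<in> I" "d \<in> D" and hi: "hom C i A B" and ht: "hom C t A X"
  shows "\<exists>h' f'. is_pushout C i t h' f'"
    and "is_pushout C i t h' f' \<Longrightarrow> \<exists>d'. kc_pair C f' d' \<and> f' \<in> I \<and> d' \<in> D"
proof -
  show "\<exists>h' f'. is_pushout C i t h' f'"
    using right_weakly_exactD(5)[OF I \<open>i \<in> I\<close> hi ht] .
  assume po: "is_pushout C i t h' f'"
  then have "f' \<in> I" by (rule right_weakly_exactD(6)[OF I \<open>i \<in> I\<close> hi ht])
  moreover obtain k where k: "is_kernel C f' k" using right_weakly_exactD(1)[OF I \<open>f' \<in> I\<close>] ..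
  have "\<exists>d'. kc_pair C f' d' \<and> d' \<in> D"
    by (rule pushout_kc_pair[OF kc hi ht po k \<open>d \<in> D\<close>])
      (rule left_weakly_exactD(7)[OF D]; assumption)
  ultimately show "\<exists>d'. kc_pair C f' d' \<and> f' \<in> I \<and> d' \<in> D" by blast
qed

lemma (in additive_category) pullback_admissible:
  assumes I: "right_weakly_exact C I" and D: "left_weakly_exact C D"
    and kc: "kc_pair C i h" and "i \<in> I" "h \<in> D" and hh: "hom C h B E" and ht: "hom C t X E"
  shows "\<exists>t' g'. is_pullback C h t t' g'"
    and "is_pullback C h t t' g' \<Longrightarrow> \<exists>i'. kc_pair C i' g' \<and> i' \<in> I \<and> g' \<in> D"
proof -
  show "\<exists>t' g'. is_pullback C h t t' g'"
    using left_weakly_exactD(5)[OF D \<open>h \<in> D\<close> hh ht] .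
  assume pb: "is_pullback C h t t' g'"
  then have "g' \<in> D" by (rule left_weakly_exactD(6)[OF D \<open>h \<in> D\<close> hh ht])
  moreover obtain c where c: "is_cokernel C g' c" using left_weakly_exactD(1)[OF D \<open>g' \<in> D\<close>] ..
  have "\<exists>i'. kc_pair C i' g' \<and> i' \<in> I"
    by (rule pullback_kc_pair[OF kc hh ht pb c \<open>i \<in> I\<close>])
      (rule right_weakly_exactD(7)[OF I]; assumption)
  ultimately show "\<exists>i'. kc_pair C i' g' \<and> i' \<in> I \<and> g' \<in> D" by blast
qed

theorem mainTheorem5:
  fixes C :: "('o, 'm) addcat" and D I :: "'m set"
  assumes "additive C"
    and "left_weakly_exact C D"
    and "right_weakly_exact C I"
  shows "weakly_exact C {(i, d). kc_pair C i d \<and> i \<in> I \<and> d \<in> D}"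
proof -
  interpret additive_category C using assms(1) by (rule additive_category.intro)
  obtain Z where Z: "zero_object C Z" using assms(1) unfolding additive_def by blast
  note I = right_weakly_exactD[OF assms(3)] and D = left_weakly_exactD[OF assms(2)]
  show ?thesis
    unfolding weakly_exact_def
  proof (intro conjI; clarsimp)
    show "kc_pair C i' d' \<and> i' \<in> I \<and> d' \<in> D"
      if "kc_pair C i d" "i \<in> I" "d \<in> D" "iso_seq C (i, d) (i', d')" for i d i' d'
      using kc_pair_iso_seq[OF that(1,4)] I(2)[OF that(2) iso_seq_iso_arrows(1)[OF that(4)]]
        D(2)[OF that(3) iso_seq_iso_arrows(2)[OF that(4)]] by blast
    show "kc_pair C i d \<and> i \<in> I \<and> d \<in> D"
      if "kc_pair C i1 d1" "i1 \<in> I" "d1 \<in> D" "kc_pair C i2 d2" "i2 \<in> I" "d2 \<in> D"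
        "dsum_seq C (i, d) (i1, d1) (i2, d2)" for i d i1 d1 i2 d2
      using kc_pair_dsum_seq[OF that(7,1,4)] I(8)[OF that(2,5) dsum_seq_dsum_mor(1)[OF that(7)]]
        D(8)[OF that(3,6) dsum_seq_dsum_mor(2)[OF that(7)]] by blast
    show "\<exists>d. kc_pair C (Idm C A) d \<and> Idm C A \<in> I \<and> d \<in> D" if "A \<in> Ob C" for A
      using kc_pair_Idm_Zer[OF Z that] I(3)[OF that] D(4)[OF Z that] by blast
    show "\<exists>i. kc_pair C i (Idm C A) \<and> i \<in> I \<and> Idm C A \<in> D" if "A \<in> Ob C" for A
      using kc_pair_Zer_Idm[OF Z that] I(4)[OF Z that] D(3)[OF that] by blast
    show "(\<exists>h'. Ex (is_pushout C i t h')) \<and>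
        (\<forall>h' f'. is_pushout C i t h' f' \<longrightarrow> (\<exists>d. kc_pair C f' d \<and> f' \<in> I \<and> d \<in> D))"
      if "kc_pair C i d" "i \<in> I" "d \<in> D" "hom C i A B" "hom C t A X" for i d t A B X
      using pushout_admissible[OF assms(3,2) that] by blast
    show "(\<exists>t'. Ex (is_pullback C h t t')) \<and>
        (\<forall>t' g'. is_pullback C h t t' g' \<longrightarrow> (\<exists>i. kc_pair C i g' \<and> i \<in> I \<and> g' \<in> D))"
      if "kc_pair C i h" "i \<in> I" "h \<in> D" "hom C h B E" "hom C t X E" for h i t B X E
      using pullback_admissible[OF assms(3,2) that] by blast
  qed
qed

end
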